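(* Let $\Gamma$ be a countable discrete sofic group with an ergodic sofic approximation $\Sigma$. If $\Gamma\curvearrowright(X,\mu)$ is a non-ergodic probability measure-preserving action on a standard probability space, then $h_{\Sigma,\mu}(X,\Gamma)=-\infty$.
   Context: $u_d$ is the uniform probability measure on $\{1,\dots,d\}$. A sofic approximation $\Sigma=(\sigma_i\colon\Gamma\to S_{d_i})$ satisfies $u_{d_i}(\{k:\sigma_i(g)\sigma_i(h)(k)=\sigma_i(gh)(k)\})\to1$ for all $g,h$ and $u_{d_i}(\{k:\sigma_i(g)(k)\ne\sigma_i(h)(k)\})\to1$ for $g\ne h$. It is ergodic if whenever $A_i\subseteq\{1,\dots,d_i\}$ satisfy $u_{d_i}(A_i\,\triangle\,\sigma_i(g)A_i)\to0$ for all $g\in\Gamma$, then $u_{d_i}(A_i)(1-u_{d_i}(A_i))\to0$. $h_{\Sigma,\mu}(X,\Gamma)\in\{-\infty\}\cup[0,\infty]$ denotes the sofic entropy (Bowen, Kerr–Li) with respect to $\Sigma$. *)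

theory Defs
  imports "HOL-Probability.Probability" "HOL-Algebra.Group" "HOL-Combinatorics.Permutations"
begin

definition unif :: "nat \<Rightarrow> nat set \<Rightarrow> real" where
  "unif d A = real (card (A \<inter> {1..d})) / real d"

definition symdiff :: "'x set \<Rightarrow> 'x set \<Rightarrow> 'x set" where
  "symdiff A B = (A - B) \<union> (B - A)"

definition sofic_approx ::
  "'g monoid \<Rightarrow> (nat \<Rightarrow> nat) \<Rightarrow> (nat \<Rightarrow> 'g \<Rightarrow> nat \<Rightarrow> nat) \<Rightarrow> bool" where
  "sofic_approx G d \<sigma> \<longleftrightarrow>
     (\<forall>i. 0 < d i) \<and>
     (\<forall>i. \<forall>g\<in>carrier G. \<sigma> i g permutes {1..d i}) \<and>
     (\<forall>g\<in>carrier G. \<forall>h\<in>carrier G.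
        (\<lambda>i. unif (d i) {k. \<sigma> i g (\<sigma> i h k) = \<sigma> i (g \<otimes>\<^bsub>G\<^esub> h) k}) \<longlonglongrightarrow> 1) \<and>
     (\<forall>g\<in>carrier G. \<forall>h\<in>carrier G. g \<noteq> h \<longrightarrow>
        (\<lambda>i. unif (d i) {k. \<sigma> i g k \<noteq> \<sigma> i h k}) \<longlonglongrightarrow> 1)"

definition ergodic_sofic_approx ::
  "'g monoid \<Rightarrow> (nat \<Rightarrow> nat) \<Rightarrow> (nat \<Rightarrow> 'g \<Rightarrow> nat \<Rightarrow> nat) \<Rightarrow> bool" where
  "ergodic_sofic_approx G d \<sigma> \<longleftrightarrow> sofic_approx G d \<sigma> \<and>
     (\<forall>A :: nat \<Rightarrow> nat set. (\<forall>i. A i \<subseteq> {1..d i}) \<longrightarrow>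
        (\<forall>g\<in>carrier G. (\<lambda>i. unif (d i) (symdiff (A i) (\<sigma> i g ` A i))) \<longlonglongrightarrow> 0) \<longrightarrow>
        (\<lambda>i. unif (d i) (A i) * (1 - unif (d i) (A i))) \<longlonglongrightarrow> 0)"

definition pmp_action :: "'g monoid \<Rightarrow> 'a measure \<Rightarrow> ('g \<Rightarrow> 'a \<Rightarrow> 'a) \<Rightarrow> bool" where
  "pmp_action G M T \<longleftrightarrow> group G \<and> prob_space M \<and>
     (\<forall>g\<in>carrier G. T g \<in> measurable M M \<and> distr M M (T g) = M) \<and>
     (\<forall>x\<in>space M. T \<one>\<^bsub>G\<^esub> x = x) \<and>
     (\<forall>g\<in>carrier G. \<forall>h\<in>carrier G. \<forall>x\<in>space M. T (g \<otimes>\<^bsub>G\<^esub> h) x = T g (T h x))"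

definition ergodic_action :: "'g monoid \<Rightarrow> 'a measure \<Rightarrow> ('g \<Rightarrow> 'a \<Rightarrow> 'a) \<Rightarrow> bool" where
  "ergodic_action G M T \<longleftrightarrow>
     (\<forall>A\<in>sets M. (\<forall>g\<in>carrier G. T g -` A \<inter> space M = A) \<longrightarrow>
        measure M A = 0 \<or> measure M A = 1)"

definition finite_meas_partition :: "'a measure \<Rightarrow> 'a set set \<Rightarrow> bool" where
  "finite_meas_partition M P \<longleftrightarrow>
     finite P \<and> P \<subseteq> sets M \<and> disjoint P \<and> \<Union>P = space M \<and> {} \<notin> P"

definition refines :: "'a set set \<Rightarrow> 'a set set \<Rightarrow> bool" where
  "refines \<eta> \<xi> \<longleftrightarrow> (\<forall>B\<in>\<eta>. \<exists>A\<in>\<xi>. B \<subseteq> A)"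

definition join_part ::
  "'a measure \<Rightarrow> ('g \<Rightarrow> 'a \<Rightarrow> 'a) \<Rightarrow> 'a set set \<Rightarrow> 'g set \<Rightarrow> 'a set set" where
  "join_part M T P F =
     {(\<Inter>s\<in>F. T s -` c s \<inter> space M) | c. \<forall>s\<in>F. c s \<in> P} - {{}}"

definition alg :: "'a set set \<Rightarrow> 'a set set" where
  "alg Q = {\<Union>S | S. S \<subseteq> Q}"

definition is_bool_hom :: "'a measure \<Rightarrow> nat \<Rightarrow> 'a set set \<Rightarrow> ('a set \<Rightarrow> nat set) \<Rightarrow> bool" where
  "is_bool_hom M d Q \<phi> \<longleftrightarrow>
     \<phi> (space M) = {1..d} \<and>
     (\<forall>A\<in>alg Q. \<phi> (space M - A) = {1..d} - \<phi> A) \<and>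
     (\<forall>A\<in>alg Q. \<forall>B\<in>alg Q. \<phi> (A \<union> B) = \<phi> A \<union> \<phi> B)"

definition Hom_mu ::
  "'a measure \<Rightarrow> ('g \<Rightarrow> 'a \<Rightarrow> 'a) \<Rightarrow> 'a set set \<Rightarrow> 'g set \<Rightarrow> real \<Rightarrow> nat \<Rightarrow> ('g \<Rightarrow> nat \<Rightarrow> nat)
     \<Rightarrow> ('a set \<Rightarrow> nat set) set" where
  "Hom_mu M T \<xi> F \<delta> d s =
     {\<phi>. is_bool_hom M d (join_part M T \<xi> F) \<phi> \<and>
       (\<forall>g\<in>F. (\<Sum>A\<in>\<xi>. unif d (symdiff (s g -` \<phi> A \<inter> {1..d}) (\<phi> (T g -` A \<inter> space M)))) < \<delta>) \<and>
       (\<Sum>A\<in>join_part M T \<xi> F. \<bar>unif d (\<phi> A) - measure M A\<bar>) < \<delta>}"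

definition hom_count ::
  "'a measure \<Rightarrow> ('g \<Rightarrow> 'a \<Rightarrow> 'a) \<Rightarrow> 'a set set \<Rightarrow> 'a set set \<Rightarrow> 'g set \<Rightarrow> real \<Rightarrow> nat
     \<Rightarrow> ('g \<Rightarrow> nat \<Rightarrow> nat) \<Rightarrow> nat" where
  "hom_count M T \<xi> \<eta> F \<delta> d s = card ((\<lambda>\<phi>. restrict \<phi> (alg \<xi>)) ` Hom_mu M T \<eta> F \<delta> d s)"

definition log_rate :: "nat \<Rightarrow> nat \<Rightarrow> ereal" where
  "log_rate d N = (if N = 0 then -\<infinity> else ereal (ln (real N) / real d))"

definition sofic_entropy ::
  "'g monoid \<Rightarrow> 'a measure \<Rightarrow> ('g \<Rightarrow> 'a \<Rightarrow> 'a) \<Rightarrow> (nat \<Rightarrow> nat) \<Rightarrow> (nat \<Rightarrow> 'g \<Rightarrow> nat \<Rightarrow> nat) \<Rightarrow> ereal" where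
  "sofic_entropy G M T d \<sigma> =
     (SUP \<xi>\<in>{\<xi>. finite_meas_partition M \<xi>}.
       INF \<eta>\<in>{\<eta>. finite_meas_partition M \<eta> \<and> refines \<eta> \<xi>}.
         INF F\<in>{F. finite F \<and> F \<subseteq> carrier G \<and> \<one>\<^bsub>G\<^esub> \<in> F}.
           INF \<delta>\<in>{0<..}.
             limsup (\<lambda>i. log_rate (d i) (hom_count M T \<xi> \<eta> F \<delta> (d i) (\<sigma> i))))"

end

theory Submission
  imports Defs
begin

text \<open>A non-ergodic action has an invariant set \<open>A\<close> with \<open>0 < \<mu>(A) < 1\<close>, and every
  partition can be refined so that \<open>A\<close> becomes a union of cells. A homomorphism in
  \<open>Hom_mu\<close> for \<open>\<sigma> i\<close> then maps \<open>A\<close> to a subset of \<open>{1..d i}\<close> whose density is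
  \<open>\<delta>\<close>-close to \<open>\<mu>(A)\<close> and which is \<open>\<delta>\<close>-almost invariant under \<open>\<sigma> i g\<close> for \<open>g \<in> F\<close>.
  If such homomorphisms existed for infinitely many \<open>i\<close> whatever \<open>F\<close> and \<open>\<delta>\<close>, a diagonal
  choice would produce an asymptotically invariant sequence of sets with densities
  tending to \<open>\<mu>(A) \<notin> {0, 1}\<close>, contradicting ergodicity of the sofic approximation. So for
  suitable \<open>F\<close> and \<open>\<delta>\<close> these sets of homomorphisms are eventually empty and every
  partition contributes \<open>-\<infinity>\<close> to the entropy.\<close>

lemma symdiff_UN_subset:
  "symdiff (\<Union>i\<in>I. f i) (\<Union>i\<in>I. h i) \<subseteq> (\<Union>i\<in>I. symdiff (f i) (h i))"
  unfolding symdiff_def by blast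

lemma unif_nonneg: "0 \<le> unif d X"
  unfolding unif_def by simp

lemma unif_mono: "X \<subseteq> Y \<Longrightarrow> unif d X \<le> unif d Y"
  unfolding unif_def by (intro divide_right_mono) (auto intro!: card_mono)

lemma unif_Int_atLeastAtMost: "unif d (X \<inter> {1..d}) = unif d X"
  unfolding unif_def by (simp add: Int_assoc)

lemma unif_UN_le:
  assumes "finite S"
  shows "unif d (\<Union>x\<in>S. f x) \<le> (\<Sum>x\<in>S. unif d (f x))"
proof -
  have "card ((\<Union>x\<in>S. f x) \<inter> {1..d}) = card (\<Union>x\<in>S. f x \<inter> {1..d})"
    by (simp add: Int_UN_distrib2)
  also have "\<dots> \<le> (\<Sum>x\<in>S. card (f x \<inter> {1..d}))"
    using assms by (rule card_UN_le)
  finally show ?thesis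
    unfolding unif_def sum_divide_distrib[symmetric]
    by (intro divide_right_mono) (simp_all flip: of_nat_sum)
qed

lemma unif_Diff_atLeastAtMost:
  assumes "0 < d"
  shows "unif d ({1..d} - X) = 1 - unif d X"
proof -
  have "({1..d} - X) \<inter> {1..d} = {1..d} - X \<inter> {1..d}"
    by blast
  then have "card (({1..d} - X) \<inter> {1..d}) = d - card (X \<inter> {1..d})"
    by (simp add: card_Diff_subset)
  moreover have "card (X \<inter> {1..d}) \<le> d"
    using card_mono[of "{1..d}" "X \<inter> {1..d}"] by simp
  ultimately show ?thesis
    unfolding unif_def using assms by (simp add: of_nat_diff field_simps)
qed

lemma unif_symdiff_vimage_permutes:
  assumes p: "p permutes {1..d}"
  shows "unif d (symdiff (p -` X \<inter> {1..d}) X)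
       = unif d (symdiff (X \<inter> {1..d}) (p ` (X \<inter> {1..d})))"
proof -
  let ?P = "X \<inter> {1..d}"
  have inj: "inj p" and img: "p ` {1..d} = {1..d}"
    using p by (simp_all add: permutes_inj permutes_image)
  have "p ` (symdiff (p -` X \<inter> {1..d}) X \<inter> {1..d}) = symdiff ?P (p ` ?P)"
    unfolding symdiff_def Int_Un_distrib2 Diff_Int_distrib2 image_Un image_set_diff[OF inj]
    using img permutes_surj[OF p] by (auto simp: image_Int[OF inj])
  moreover have "symdiff ?P (p ` ?P) \<subseteq> {1..d}"
    unfolding symdiff_def using img by blast
  ultimately show ?thesis
    unfolding unif_def using inj
    by (metis card_image inf.absorb1 inj_on_subset subset_UNIV)
qed

lemma countable_finite_exhaustion:
  assumes "countable C" "e \<in> C"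
  obtains F :: "nat \<Rightarrow> 'a set"
  where "\<And>n. finite (F n)" "\<And>n. F n \<subseteq> C" "\<And>n. e \<in> F n" "incseq F"
    and "\<And>g. g \<in> C \<Longrightarrow> \<exists>n. g \<in> F n"
proof
  define f where "f = from_nat_into C"
  have range: "range f = C"
    unfolding f_def using assms by (intro range_from_nat_into) auto
  show "finite (insert e (f ` {..<n}))" for n by simp
  show "insert e (f ` {..<n}) \<subseteq> C" for n using range assms(2) by auto
  show "e \<in> insert e (f ` {..<n})" for n by simp
  show "incseq (\<lambda>n. insert e (f ` {..<n}))"
    by (intro monoI insert_mono image_mono) auto
  show "\<exists>n. g \<in> insert e (f ` {..<n})" if g: "g \<in> C" for g
  proof -
    obtain k where "g = f k" using g range by blast
    then show ?thesis by (intro exI[of _ "Suc k"]) auto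
  qed
qed

lemma strict_mono_choice:
  assumes "\<And>n N. \<exists>i\<ge>N. R n i"
  obtains idx :: "nat \<Rightarrow> nat" where "strict_mono idx" "\<And>n. R n (idx n)"
proof -
  have "\<exists>idx. \<forall>n. R n (idx n) \<and> idx n < idx (Suc n)"
  proof (rule dependent_nat_choice)
    show "\<exists>i. R 0 i" using assms by blast
    show "\<exists>j. R (Suc n) j \<and> i < j" for i n
      using assms[where n = "Suc n" and N = "Suc i"] by (auto simp: Suc_le_eq)
  qed
  then show thesis using that by (metis strict_mono_Suc_iff)
qed

lemma LIMSEQ_vanishing_off_subseq:
  fixes u :: "nat \<Rightarrow> 'a::real_normed_vector"
  assumes idx: "strict_mono idx" and off: "\<And>i. i \<notin> range idx \<Longrightarrow> u i = 0"
    and along: "(\<lambda>n. u (idx n)) \<longlonglongrightarrow> 0"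
  shows "u \<longlonglongrightarrow> 0"
proof (rule LIMSEQ_I)
  fix r :: real assume "0 < r"
  then obtain N where N: "\<And>n. N \<le> n \<Longrightarrow> norm (u (idx n)) < r"
    using LIMSEQ_D[OF along] by fastforce
  have "norm (u i) < r" if "idx N \<le> i" for i
  proof (cases "i \<in> range idx")
    case True
    then obtain n where "i = idx n" by blast
    then show ?thesis using N that idx by (simp add: strict_mono_less_eq)
  qed (simp add: off \<open>0 < r\<close>)
  then show "\<exists>N. \<forall>i\<ge>N. norm (u i - 0) < r" by auto
qed

lemma no_frequent_almost_invariant_sets:
  fixes d :: "nat \<Rightarrow> nat" and \<sigma> :: "nat \<Rightarrow> 'g \<Rightarrow> nat \<Rightarrow> nat" and a :: real
  assumes "countable C" "e \<in> C" and a: "0 < a" "a < 1"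
    and erg: "\<forall>A :: nat \<Rightarrow> nat set. (\<forall>i. A i \<subseteq> {1..d i}) \<longrightarrow>
        (\<forall>g\<in>C. (\<lambda>i. unif (d i) (symdiff (A i) (\<sigma> i g ` A i))) \<longlonglongrightarrow> 0) \<longrightarrow>
        (\<lambda>i. unif (d i) (A i) * (1 - unif (d i) (A i))) \<longlonglongrightarrow> 0"
    and freq: "\<And>F \<delta> N. finite F \<Longrightarrow> F \<subseteq> C \<Longrightarrow> e \<in> F \<Longrightarrow> 0 < \<delta> \<Longrightarrow>
        \<exists>i\<ge>N. \<exists>P. P \<subseteq> {1..d i} \<and> (\<forall>g\<in>F. unif (d i) (symdiff P (\<sigma> i g ` P)) < \<delta>)
          \<and> \<bar>unif (d i) P - a\<bar> < \<delta>"
  shows False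
proof -
  obtain F where F: "\<And>n. finite (F n)" "\<And>n. F n \<subseteq> C" "\<And>n. e \<in> F n" "incseq F"
    and exhaust: "\<And>g. g \<in> C \<Longrightarrow> \<exists>n. g \<in> F n"
    using countable_finite_exhaustion[OF assms(1,2)] by blast
  define \<delta> :: "nat \<Rightarrow> real" where "\<delta> n = inverse (real (Suc n))" for n
  have \<delta>: "\<delta> \<longlonglongrightarrow> 0"
    unfolding \<delta>_def by (rule LIMSEQ_inverse_real_of_nat)
  define good where "good n i P \<longleftrightarrow> P \<subseteq> {1..d i}
      \<and> (\<forall>g\<in>F n. unif (d i) (symdiff P (\<sigma> i g ` P)) < \<delta> n) \<and> \<bar>unif (d i) P - a\<bar> < \<delta> n"
    for n i P
  have "\<exists>i\<ge>N. \<exists>P. good n i P" for n N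
    unfolding good_def \<delta>_def using freq[OF F(1-3)] by simp
  then obtain idx where mono_idx: "strict_mono idx" and "\<And>n. \<exists>P. good n (idx n) P"
    using strict_mono_choice[where R = "\<lambda>n i. \<exists>P. good n i P"] by blast
  then obtain P where good: "\<And>n. good n (idx n) (P n)" by metis
  define A where "A i = (if i \<in> range idx then P (inv_into UNIV idx i) else {})" for i
  have A_idx: "A (idx n) = P n" for n
    unfolding A_def using strict_mono_imp_inj_on[OF mono_idx] by simp
  have "A i \<subseteq> {1..d i}" for i
  proof (cases "i \<in> range idx")
    case True
    then obtain n where "i = idx n" by blast
    then show ?thesis using good[of n] A_idx unfolding good_def by simp
  qed (simp add: A_def)
  moreover have "(\<lambda>i. unif (d i) (symdiff (A i) (\<sigma> i g ` A i))) \<longlonglongrightarrow> 0" if g: "g \<in> C" for g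
  proof (rule LIMSEQ_vanishing_off_subseq[OF mono_idx])
    show "i \<notin> range idx \<Longrightarrow> unif (d i) (symdiff (A i) (\<sigma> i g ` A i)) = 0" for i
      by (simp add: A_def symdiff_def unif_def)
    obtain k where "g \<in> F k" using exhaust[OF g] by blast
    then have "\<forall>\<^sub>F n in sequentially. g \<in> F n"
      unfolding eventually_sequentially using monoD[OF F(4)] by blast
    then have "\<forall>\<^sub>F n in sequentially.
        norm (unif (d (idx n)) (symdiff (A (idx n)) (\<sigma> (idx n) g ` A (idx n)))) \<le> \<delta> n"
      using good unif_nonneg unfolding A_idx good_def by (auto elim!: eventually_mono intro: less_imp_le)
    then show "(\<lambda>n. unif (d (idx n)) (symdiff (A (idx n)) (\<sigma> (idx n) g ` A (idx n)))) \<longlonglongrightarrow> 0"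
      using \<delta> by (rule Lim_null_comparison)
  qed
  ultimately have "(\<lambda>i. unif (d i) (A i) * (1 - unif (d i) (A i))) \<longlonglongrightarrow> 0"
    using erg by blast
  from LIMSEQ_subseq_LIMSEQ[OF this mono_idx]
  have "(\<lambda>n. unif (d (idx n)) (P n) * (1 - unif (d (idx n)) (P n))) \<longlonglongrightarrow> 0"
    by (simp add: comp_def A_idx)
  moreover have "(\<lambda>n. unif (d (idx n)) (P n)) \<longlonglongrightarrow> a"
    using good unfolding good_def Lim_null[of _ a]
    by (intro Lim_null_comparison[OF _ \<delta>] always_eventually allI less_imp_le) simp
  then have "(\<lambda>n. unif (d (idx n)) (P n) * (1 - unif (d (idx n)) (P n))) \<longlonglongrightarrow> a * (1 - a)"
    by (intro tendsto_intros)
  ultimately have "a * (1 - a) = 0"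
    using LIMSEQ_unique by blast
  with a show False by simp
qed

definition saturated :: "'a set set \<Rightarrow> 'a set \<Rightarrow> bool" where
  "saturated Q S \<longleftrightarrow> (\<forall>C\<in>Q. C \<subseteq> S \<or> C \<inter> S = {})"

lemma alg_Un: "X \<in> alg Q \<Longrightarrow> Y \<in> alg Q \<Longrightarrow> X \<union> Y \<in> alg Q"
proof -
  assume "X \<in> alg Q" "Y \<in> alg Q"
  then obtain S1 S2 where "S1 \<subseteq> Q" "X = \<Union>S1" "S2 \<subseteq> Q" "Y = \<Union>S2"
    unfolding alg_def by blast
  then have "S1 \<union> S2 \<subseteq> Q" "X \<union> Y = \<Union>(S1 \<union> S2)" by auto
  then show ?thesis unfolding alg_def by blast
qed

locale join_partition =
  fixes M :: "'a measure" and T :: "'g \<Rightarrow> 'a \<Rightarrow> 'a" and \<eta> :: "'a set set" and F :: "'g set"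
  assumes partition: "finite_meas_partition M \<eta>"
    and finite_F: "finite F" and F_nonempty: "F \<noteq> {}"
    and measurable_T: "\<And>s. s \<in> F \<Longrightarrow> T s \<in> measurable M M"
begin

abbreviation "J \<equiv> join_part M T \<eta> F"

lemma join_part_cellE:
  assumes "C \<in> J"
  obtains c where "\<And>s. s \<in> F \<Longrightarrow> c s \<in> \<eta>" "C = (\<Inter>s\<in>F. T s -` c s \<inter> space M)"
  using assms unfolding join_part_def by blast

lemma join_part_subset_space: "C \<in> J \<Longrightarrow> C \<subseteq> space M"
  using F_nonempty by (elim join_part_cellE) auto

lemma join_part_sets: "C \<in> J \<Longrightarrow> C \<in> sets M"
proof (elim join_part_cellE)
  fix c assume c: "\<And>s. s \<in> F \<Longrightarrow> c s \<in> \<eta>" and C: "C = (\<Inter>s\<in>F. T s -` c s \<inter> space M)"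
  have "\<And>s. s \<in> F \<Longrightarrow> T s -` c s \<inter> space M \<in> sets M"
    using partition c unfolding finite_meas_partition_def by (auto intro: measurable_sets measurable_T)
  then show "C \<in> sets M"
    unfolding C using finite_F F_nonempty by (intro sets.finite_INT) auto
qed

lemma join_part_cover:
  assumes x: "x \<in> space M"
  shows "\<exists>C\<in>J. x \<in> C"
proof -
  have "\<exists>B\<in>\<eta>. T s x \<in> B" if "s \<in> F" for s
    using partition measurable_space[OF measurable_T[OF that] x]
    unfolding finite_meas_partition_def by blast
  then obtain c where c: "\<And>s. s \<in> F \<Longrightarrow> c s \<in> \<eta> \<and> T s x \<in> c s" by metis
  let ?C = "\<Inter>s\<in>F. T s -` c s \<inter> space M"
  have "x \<in> ?C" using c x by blast
  moreover have "?C \<in> J" unfolding join_part_def using c \<open>x \<in> ?C\<close> by blast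
  ultimately show ?thesis by blast
qed

lemma join_part_disjoint:
  assumes "C1 \<in> J" "C2 \<in> J" "C1 \<inter> C2 \<noteq> {}"
  shows "C1 = C2"
proof -
  obtain c1 where c1: "\<And>s. s \<in> F \<Longrightarrow> c1 s \<in> \<eta>" "C1 = (\<Inter>s\<in>F. T s -` c1 s \<inter> space M)"
    using join_part_cellE[OF assms(1)] by blast
  obtain c2 where c2: "\<And>s. s \<in> F \<Longrightarrow> c2 s \<in> \<eta>" "C2 = (\<Inter>s\<in>F. T s -` c2 s \<inter> space M)"
    using join_part_cellE[OF assms(2)] by blast
  obtain x where x: "x \<in> C1" "x \<in> C2" using assms(3) by blast
  have "c1 s = c2 s" if "s \<in> F" for s
  proof -
    have "T s x \<in> c1 s \<inter> c2 s" using x c1(2) c2(2) that by blast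
    then show ?thesis
      using partition c1(1)[OF that] c2(1)[OF that]
      unfolding finite_meas_partition_def disjoint_def disjnt_def by blast
  qed
  then show ?thesis using c1(2) c2(2) by (auto intro!: INF_cong)
qed

lemma finite_join_part: "finite J"
proof -
  have "J \<subseteq> (\<lambda>c. \<Inter>s\<in>F. T s -` c s \<inter> space M) ` (PiE F (\<lambda>_. \<eta>))"
  proof
    fix C assume "C \<in> J"
    then obtain c where c: "\<And>s. s \<in> F \<Longrightarrow> c s \<in> \<eta>" "C = (\<Inter>s\<in>F. T s -` c s \<inter> space M)"
      using join_part_cellE by blast
    then have "restrict c F \<in> PiE F (\<lambda>_. \<eta>)" "C = (\<Inter>s\<in>F. T s -` restrict c F s \<inter> space M)"
      by auto
    then show "C \<in> (\<lambda>c. \<Inter>s\<in>F. T s -` c s \<inter> space M) ` (PiE F (\<lambda>_. \<eta>))" by blast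
  qed
  moreover have "finite (PiE F (\<lambda>_. \<eta>))"
    using partition finite_F unfolding finite_meas_partition_def by (intro finite_PiE) auto
  ultimately show ?thesis by (meson finite_imageI finite_subset)
qed

lemma saturated_join_part_vimage:
  assumes "saturated \<eta> S" "t \<in> F"
  shows "saturated J (T t -` S \<inter> space M)"
  unfolding saturated_def
proof
  fix C assume "C \<in> J"
  then obtain c where "\<And>s. s \<in> F \<Longrightarrow> c s \<in> \<eta>" "C = (\<Inter>s\<in>F. T s -` c s \<inter> space M)"
    using join_part_cellE by blast
  with assms have "C \<subseteq> T t -` c t \<inter> space M" "c t \<subseteq> S \<or> c t \<inter> S = {}"
    unfolding saturated_def by blast+
  then show "C \<subseteq> T t -` S \<inter> space M \<or> C \<inter> (T t -` S \<inter> space M) = {}" by blast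
qed

lemma saturated_eq_Union_cells:
  assumes "S \<subseteq> space M" "saturated J S"
  shows "S = \<Union>{C\<in>J. C \<subseteq> S}"
proof
  show "S \<subseteq> \<Union>{C\<in>J. C \<subseteq> S}"
  proof
    fix x assume "x \<in> S"
    then obtain C where "C \<in> J" "x \<in> C" using join_part_cover assms(1) by blast
    then show "x \<in> \<Union>{C\<in>J. C \<subseteq> S}" using assms(2) \<open>x \<in> S\<close> unfolding saturated_def by blast
  qed
qed blast

lemma saturated_in_alg: "S \<subseteq> space M \<Longrightarrow> saturated J S \<Longrightarrow> S \<in> alg J"
  unfolding alg_def by (blast dest: saturated_eq_Union_cells)

lemma bool_hom_Union:
  assumes hom: "is_bool_hom M d J \<phi>" and "finite S" "S \<subseteq> alg J"
  shows "\<phi> (\<Union>S) = (\<Union>X\<in>S. \<phi> X)"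
proof -
  have "space M \<in> alg J"
    using join_part_subset_space by (intro saturated_in_alg) (auto simp: saturated_def)
  then have "\<phi> {} = {}" using hom unfolding is_bool_hom_def by (metis Diff_cancel)
  have "\<phi> (\<Union>S) = (\<Union>X\<in>S. \<phi> X) \<and> \<Union>S \<in> alg J" using assms(2,3)
  proof (induction S rule: finite_induct)
    case empty
    then show ?case using \<open>\<phi> {} = {}\<close> unfolding alg_def by auto
  next
    case (insert X S)
    then have "\<phi> (X \<union> \<Union>S) = \<phi> X \<union> \<phi> (\<Union>S)"
      using hom unfolding is_bool_hom_def by blast
    moreover have "X \<union> \<Union>S \<in> alg J" using insert by (intro alg_Un) auto
    ultimately show ?case using insert by simp
  qed
  then show ?thesis by blast
qed

end

locale join_partition_invariant_set = join_partition +
  fixes A and e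
  assumes A_sets: "A \<in> sets M"
    and A_invariant: "\<And>g. g \<in> F \<Longrightarrow> T g -` A \<inter> space M = A"
    and saturated_A: "saturated \<eta> A"
    and e_in_F: "e \<in> F" and T_e: "\<And>x. x \<in> space M \<Longrightarrow> T e x = x"
begin

lemma A_subset_space: "A \<subseteq> space M"
  using A_sets by (rule sets.sets_into_space)

lemma saturated_join_part_A: "saturated J A"
  using saturated_join_part_vimage[OF saturated_A e_in_F] A_invariant[OF e_in_F] by simp

lemma saturated_join_part_compl: "saturated J (space M - A)"
  using saturated_join_part_A join_part_subset_space unfolding saturated_def by blast

lemma vimage_partition_in_alg:
  assumes "B \<in> \<eta>" "g \<in> F"
  shows "T g -` B \<inter> space M \<in> alg J"
proof -
  have "saturated \<eta> B"
    using partition assms(1) unfolding finite_meas_partition_def saturated_def disjoint_def disjnt_def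
    by blast
  then show ?thesis
    by (intro saturated_in_alg saturated_join_part_vimage assms(2)) auto
qed

lemma partition_in_alg:
  assumes "B \<in> \<eta>"
  shows "B \<in> alg J"
proof -
  have "B \<subseteq> space M"
    using assms partition sets.sets_into_space unfolding finite_meas_partition_def by blast
  then have "T e -` B \<inter> space M = B" using T_e by force
  then show ?thesis using vimage_partition_in_alg[OF assms e_in_F] by simp
qed

lemma A_eq_Union_partition: "A = \<Union>{B\<in>\<eta>. B \<subseteq> A}"
  using A_subset_space saturated_A partition
  unfolding saturated_def finite_meas_partition_def by blast

lemma unif_less_measure_add:
  assumes "prob_space M" and \<phi>: "\<phi> \<in> Hom_mu M T \<eta> F \<delta> d p"
    and S: "S \<subseteq> space M" "saturated J S"
  shows "unif d (\<phi> S) < measure M S + \<delta>"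
proof -
  interpret prob_space M by (rule assms(1))
  have hom: "is_bool_hom M d J \<phi>"
    and close: "(\<Sum>C\<in>J. \<bar>unif d (\<phi> C) - measure M C\<bar>) < \<delta>"
    using \<phi> unfolding Hom_mu_def by blast+
  define JS where "JS = {C\<in>J. C \<subseteq> S}"
  have JS: "finite JS" "JS \<subseteq> alg J" "JS \<subseteq> J"
    unfolding JS_def alg_def using finite_join_part by auto
  have S_eq: "S = \<Union>JS"
    unfolding JS_def using S by (rule saturated_eq_Union_cells)
  have "unif d (\<phi> S) \<le> (\<Sum>C\<in>JS. unif d (\<phi> C))"
    using bool_hom_Union[OF hom JS(1,2)] unif_UN_le[OF JS(1)] S_eq by simp
  also have "\<dots> \<le> (\<Sum>C\<in>JS. measure M C) + (\<Sum>C\<in>JS. \<bar>unif d (\<phi> C) - measure M C\<bar>)"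
    unfolding sum.distrib[symmetric] by (intro sum_mono) linarith
  also have "(\<Sum>C\<in>JS. measure M C) = measure M S"
  proof -
    have "JS \<subseteq> sets M" "disjoint_family_on (\<lambda>C. C) JS"
      using JS(3) join_part_sets join_part_disjoint unfolding disjoint_family_on_def by blast+
    then show ?thesis
      using measure_finite_Union[of JS "\<lambda>C. C" M] JS(1) emeasure_finite S_eq by simp
  qed
  also have "(\<Sum>C\<in>JS. \<bar>unif d (\<phi> C) - measure M C\<bar>) \<le> (\<Sum>C\<in>J. \<bar>unif d (\<phi> C) - measure M C\<bar>)"
    using JS(3) finite_join_part by (intro sum_mono2) auto
  finally show ?thesis using close by linarith
qed

lemma abs_unif_measure_less:
  assumes "prob_space M" "0 < d" and \<phi>: "\<phi> \<in> Hom_mu M T \<eta> F \<delta> d p"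
  shows "\<bar>unif d (\<phi> A) - measure M A\<bar> < \<delta>"
proof -
  interpret prob_space M by (rule assms(1))
  have "\<phi> (space M - A) = {1..d} - \<phi> A"
    using \<phi> saturated_in_alg[OF A_subset_space saturated_join_part_A]
    unfolding Hom_mu_def is_bool_hom_def by blast
  then have "unif d (\<phi> (space M - A)) = 1 - unif d (\<phi> A)"
    using unif_Diff_atLeastAtMost[OF assms(2)] by simp
  moreover have "measure M (space M - A) = 1 - measure M A"
    using prob_compl A_sets by simp
  moreover have "unif d (\<phi> (space M - A)) < measure M (space M - A) + \<delta>"
    using saturated_join_part_compl by (intro unif_less_measure_add[OF assms(1) \<phi>]) auto
  ultimately show ?thesis
    using unif_less_measure_add[OF assms(1) \<phi> A_subset_space saturated_join_part_A] by linarith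
qed

text \<open>\<open>\<phi> A\<close> is the union of the \<open>\<phi> B\<close>, and also of the \<open>\<phi> (T g -` B \<inter> space M)\<close>,
  over the cells \<open>B \<subseteq> A\<close> of \<open>\<eta>\<close>; so its defect is bounded by the cellwise defects that
  enter the definition of \<open>Hom_mu\<close>.\<close>
lemma unif_symdiff_image_less:
  assumes \<phi>: "\<phi> \<in> Hom_mu M T \<eta> F \<delta> d p" and g: "g \<in> F" and p: "p g permutes {1..d}"
  shows "unif d (symdiff (\<phi> A \<inter> {1..d}) (p g ` (\<phi> A \<inter> {1..d}))) < \<delta>"
proof -
  have hom: "is_bool_hom M d J \<phi>"
    and defect: "(\<Sum>B\<in>\<eta>. unif d (symdiff (p g -` \<phi> B \<inter> {1..d}) (\<phi> (T g -` B \<inter> space M)))) < \<delta>"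
    using \<phi> g unfolding Hom_mu_def by blast+
  define \<eta>A where "\<eta>A = {B\<in>\<eta>. B \<subseteq> A}"
  have fin: "finite \<eta>A"
    using partition unfolding \<eta>A_def finite_meas_partition_def by simp
  have "\<phi> A = (\<Union>B\<in>\<eta>A. \<phi> B)"
    using bool_hom_Union[OF hom fin] partition_in_alg A_eq_Union_partition
    unfolding \<eta>A_def by auto
  then have pull: "p g -` \<phi> A \<inter> {1..d} = (\<Union>B\<in>\<eta>A. p g -` \<phi> B \<inter> {1..d})"
    by blast
  have "A = T g -` (\<Union>\<eta>A) \<inter> space M"
    using A_invariant[OF g] A_eq_Union_partition unfolding \<eta>A_def by simp
  also have "\<dots> = \<Union>((\<lambda>B. T g -` B \<inter> space M) ` \<eta>A)"
    by blast
  finally have push: "\<phi> A = (\<Union>B\<in>\<eta>A. \<phi> (T g -` B \<inter> space M))"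
    using bool_hom_Union[OF hom, of "(\<lambda>B. T g -` B \<inter> space M) ` \<eta>A"] fin
      vimage_partition_in_alg[OF _ g] unfolding \<eta>A_def by (simp add: image_image image_subset_iff)
  have "unif d (symdiff (p g -` \<phi> A \<inter> {1..d}) (\<phi> A))
      \<le> unif d (\<Union>B\<in>\<eta>A. symdiff (p g -` \<phi> B \<inter> {1..d}) (\<phi> (T g -` B \<inter> space M)))"
    unfolding pull by (intro unif_mono, subst push) (rule symdiff_UN_subset)
  also have "\<dots> \<le> (\<Sum>B\<in>\<eta>A. unif d (symdiff (p g -` \<phi> B \<inter> {1..d}) (\<phi> (T g -` B \<inter> space M))))"
    using fin by (rule unif_UN_le)
  also have "\<dots> \<le> (\<Sum>B\<in>\<eta>. unif d (symdiff (p g -` \<phi> B \<inter> {1..d}) (\<phi> (T g -` B \<inter> space M))))"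
    using partition unif_nonneg unfolding \<eta>A_def finite_meas_partition_def
    by (intro sum_mono2) auto
  finally show ?thesis
    using defect unif_symdiff_vimage_permutes[OF p] by simp
qed

end

lemma finite_meas_partition_split:
  assumes \<xi>: "finite_meas_partition M \<xi>" and A: "A \<in> sets M"
  obtains \<eta> where "finite_meas_partition M \<eta>" "refines \<eta> \<xi>" "saturated \<eta> A"
proof
  let ?\<eta> = "((\<lambda>B. B \<inter> A) ` \<xi> \<union> (\<lambda>B. B - A) ` \<xi>) - {{}}"
  have "disjoint ?\<eta>"
    unfolding disjoint_def disjnt_def
  proof (intro ballI impI)
    fix X Y assume X: "X \<in> ?\<eta>" and Y: "Y \<in> ?\<eta>" and "X \<noteq> Y"
    obtain B1 where B1: "B1 \<in> \<xi>" "X = B1 \<inter> A \<or> X = B1 - A" using X by blast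
    obtain B2 where B2: "B2 \<in> \<xi>" "Y = B2 \<inter> A \<or> Y = B2 - A" using Y by blast
    have "B1 = B2 \<or> B1 \<inter> B2 = {}"
      using \<xi> B1(1) B2(1) unfolding finite_meas_partition_def disjoint_def disjnt_def by blast
    then show "X \<inter> Y = {}" using B1(2) B2(2) \<open>X \<noteq> Y\<close> by blast
  qed
  moreover have "\<Union>?\<eta> = \<Union>\<xi>" by auto
  ultimately show "finite_meas_partition M ?\<eta>"
    using \<xi> A unfolding finite_meas_partition_def by auto
  show "refines ?\<eta> \<xi>" unfolding refines_def by blast
  show "saturated ?\<eta> A" unfolding saturated_def by blast
qed

lemma limsup_log_rate_eq_minf:
  assumes "eventually (\<lambda>i. Hom_mu M T \<eta> F \<delta> (d i) (\<sigma> i) = {}) sequentially"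
  shows "limsup (\<lambda>i. log_rate (d i) (hom_count M T \<xi> \<eta> F \<delta> (d i) (\<sigma> i))) = -\<infinity>"
proof -
  have "eventually (\<lambda>i. log_rate (d i) (hom_count M T \<xi> \<eta> F \<delta> (d i) (\<sigma> i)) = -\<infinity>) sequentially"
    using assms by eventually_elim (simp add: hom_count_def log_rate_def)
  then have "limsup (\<lambda>i. log_rate (d i) (hom_count M T \<xi> \<eta> F \<delta> (d i) (\<sigma> i))) = limsup (\<lambda>_. -\<infinity>)"
    by (rule Limsup_eq)
  then show ?thesis by (simp add: Limsup_const)
qed

lemma Hom_mu_eventually_empty:
  assumes "countable (carrier G)" "ergodic_sofic_approx G d \<sigma>" "prob_space M" "pmp_action G M T"
    and A: "A \<in> sets M" "\<forall>g\<in>carrier G. T g -` A \<inter> space M = A"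
      "0 < measure M A" "measure M A < 1"
    and \<eta>: "finite_meas_partition M \<eta>" "saturated \<eta> A"
  obtains F \<delta> where "finite F" "F \<subseteq> carrier G" "\<one>\<^bsub>G\<^esub> \<in> F" "0 < \<delta>"
    "eventually (\<lambda>i. Hom_mu M T \<eta> F \<delta> (d i) (\<sigma> i) = {}) sequentially"
proof -
  have T: "group G" "\<And>g. g \<in> carrier G \<Longrightarrow> T g \<in> measurable M M"
    "\<And>x. x \<in> space M \<Longrightarrow> T \<one>\<^bsub>G\<^esub> x = x"
    using assms(4) unfolding pmp_action_def by auto
  have "sofic_approx G d \<sigma>" and erg: "\<forall>A :: nat \<Rightarrow> nat set. (\<forall>i. A i \<subseteq> {1..d i}) \<longrightarrow>
        (\<forall>g\<in>carrier G. (\<lambda>i. unif (d i) (symdiff (A i) (\<sigma> i g ` A i))) \<longlonglongrightarrow> 0) \<longrightarrow>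
        (\<lambda>i. unif (d i) (A i) * (1 - unif (d i) (A i))) \<longlonglongrightarrow> 0"
    using assms(2) unfolding ergodic_sofic_approx_def by (rule conjunct1, rule conjunct2)
  then have sofic: "\<And>i. 0 < d i" "\<And>i g. g \<in> carrier G \<Longrightarrow> \<sigma> i g permutes {1..d i}"
    unfolding sofic_approx_def by auto
  have one: "\<one>\<^bsub>G\<^esub> \<in> carrier G"
    using T(1) by (simp add: group.is_monoid monoid.one_closed)
  have "\<exists>F \<delta>. finite F \<and> F \<subseteq> carrier G \<and> \<one>\<^bsub>G\<^esub> \<in> F \<and> 0 < \<delta> \<and>
      eventually (\<lambda>i. Hom_mu M T \<eta> F \<delta> (d i) (\<sigma> i) = {}) sequentially"
  proof (rule ccontr)
    assume none: "\<not> ?thesis"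
    show False
    proof (rule no_frequent_almost_invariant_sets[OF assms(1) one A(3,4) erg])
      fix F and \<delta> :: real and N :: nat
      assume F: "finite F" "F \<subseteq> carrier G" "\<one>\<^bsub>G\<^esub> \<in> F" and "0 < \<delta>"
      then have "frequently (\<lambda>i. Hom_mu M T \<eta> F \<delta> (d i) (\<sigma> i) \<noteq> {}) sequentially"
        using none by (simp add: not_eventually)
      then obtain i \<phi> where "N \<le> i" and \<phi>: "\<phi> \<in> Hom_mu M T \<eta> F \<delta> (d i) (\<sigma> i)"
        unfolding frequently_sequentially by blast
      interpret join_partition_invariant_set M T \<eta> F A "\<one>\<^bsub>G\<^esub>"
        using \<eta> F A(1,2) T by unfold_locales auto
      have "\<forall>g\<in>F. unif (d i) (symdiff (\<phi> A \<inter> {1..d i}) (\<sigma> i g ` (\<phi> A \<inter> {1..d i}))) < \<delta>"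
        using unif_symdiff_image_less[OF \<phi> _ sofic(2)] F(2) by blast
      moreover have "\<bar>unif (d i) (\<phi> A \<inter> {1..d i}) - measure M A\<bar> < \<delta>"
        unfolding unif_Int_atLeastAtMost by (rule abs_unif_measure_less[OF assms(3) sofic(1) \<phi>])
      ultimately show "\<exists>i\<ge>N. \<exists>P. P \<subseteq> {1..d i} \<and> (\<forall>g\<in>F. unif (d i) (symdiff P (\<sigma> i g ` P)) < \<delta>)
          \<and> \<bar>unif (d i) P - measure M A\<bar> < \<delta>"
        using \<open>N \<le> i\<close> Int_lower2 by blast
    qed
  qed
  then show thesis using that by blast
qed

theorem proposition4p17:
  fixes G :: "'g monoid" and M :: "'a::polish_space measure" and T :: "'g \<Rightarrow> 'a \<Rightarrow> 'a"
    and d :: "nat \<Rightarrow> nat" and \<sigma> :: "nat \<Rightarrow> 'g \<Rightarrow> nat \<Rightarrow> nat"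
  assumes "group G" and "countable (carrier G)"
    and "ergodic_sofic_approx G d \<sigma>"
    and "sets M = sets borel" and "prob_space M"
    and "pmp_action G M T"
    and "\<not> ergodic_action G M T"
  shows "sofic_entropy G M T d \<sigma> = -\<infinity>"
proof -
  obtain A where A: "A \<in> sets M" "\<forall>g\<in>carrier G. T g -` A \<inter> space M = A"
    and "measure M A \<noteq> 0" "measure M A \<noteq> 1"
    using assms(7) unfolding ergodic_action_def by blast
  then have "0 < measure M A" "measure M A < 1"
    using prob_space.prob_le_1[OF assms(5), of A] measure_nonneg[of M A] by linarith+
  note Hom_mu_empty = Hom_mu_eventually_empty[OF assms(2,3,5,6) A this]
  have "sofic_entropy G M T d \<sigma> \<le> -\<infinity>"
    unfolding sofic_entropy_def
  proof (rule SUP_least)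
    fix \<xi> assume "\<xi> \<in> {\<xi>. finite_meas_partition M \<xi>}"
    then obtain \<eta> where \<eta>: "finite_meas_partition M \<eta>" "refines \<eta> \<xi>" "saturated \<eta> A"
      using finite_meas_partition_split A(1) by blast
    obtain F \<delta> where "finite F" "F \<subseteq> carrier G" "\<one>\<^bsub>G\<^esub> \<in> F" "0 < \<delta>"
      and "eventually (\<lambda>i. Hom_mu M T \<eta> F \<delta> (d i) (\<sigma> i) = {}) sequentially"
      by (rule Hom_mu_empty[OF \<eta>(1,3)])
    note this(1-4) limsup_log_rate_eq_minf[OF this(5), of \<xi>]
    then show "(INF \<eta>\<in>{\<eta>. finite_meas_partition M \<eta> \<and> refines \<eta> \<xi>}.
        INF F\<in>{F. finite F \<and> F \<subseteq> carrier G \<and> \<one>\<^bsub>G\<^esub> \<in> F}. INF \<delta>\<in>{0<..}.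
          limsup (\<lambda>i. log_rate (d i) (hom_count M T \<xi> \<eta> F \<delta> (d i) (\<sigma> i)))) \<le> -\<infinity>"
      using \<eta>(1,2) by (intro INF_lower2[of \<eta>] INF_lower2[of F] INF_lower2[of \<delta>]) auto
  qed
  then show ?thesis by simp
qed

end
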